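(* Let $X$ be a compact metric space of negative type. Then the bilinear form $\langle\cdot,\cdot\rangle_{\mathscr{W}}$ is positive definite on the whole space $\mathscr{M}(X)$ of finite signed Borel measures on $X$: for every $\mu\in\mathscr{M}(X)$, $\langle\mu,\mu\rangle_{\mathscr{W}}\ge 0$, with equality only if $\mu=0$.
   Context: A metric space $(X,d)$ is of negative type if the metric space $(X,\sqrt{d})$ admits an isometric embedding into a (real) Hilbert space. The similarity kernel is $Z(x,y)=e^{-d(x,y)}$, and for finite signed Borel measures $\mu,\nu$ on $X$, $\langle \mu,\nu\rangle_{\mathscr{W}} = \int_X\int_X e^{-d(x,y)}\,\mu(dx)\,\nu(dy)$. *)

theory Defs
  imports "HOL-Analysis.Analysis"
begin

definition W_inner :: "'a::metric_space measure \<Rightarrow> 'a measure \<Rightarrow> real" where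
  "W_inner M N = (\<integral>x. (\<integral>y. exp (- dist x y) \<partial>N) \<partial>M)"

text \<open>A finite signed Borel measure is represented as a difference M1 - M2 of two finite
  (positive) Borel measures (Jordan decomposition). By bilinearity,
  W(M1 - M2, M1 - M2) is given as follows.\<close>
definition W_signed_sq :: "'a::metric_space measure \<Rightarrow> 'a measure \<Rightarrow> real" where
  "W_signed_sq M1 M2 = W_inner M1 M1 - W_inner M1 M2 - W_inner M2 M1 + W_inner M2 M2"

end

theory Submission
  imports Defs
begin

text \<open>
Fix a base point \<open>x0\<close> and write \<open>(x|y)\<close> for the Gromov product based at \<open>x0\<close>. Negative
type says that \<open>(x|y)\<close> is the inner product of \<open>\<phi> x - \<phi> x0\<close> and \<open>\<phi> y - \<phi> x0\<close>, so
\<open>exp (- d p q) = w p * w q * exp (2 * (p|q))\<close> with \<open>w x = exp (- d x x0)\<close>. Expanding the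
exponential, every term is a form in a Hadamard power of a Gram matrix, hence nonnegative, and
Cauchy-Schwarz bounds the squared moment of \<open>w * (z1|_) * ... * (zn|_)\<close> against a finitely
supported signed measure by \<open>n! / 2^n * d z1 x0 * ... * d zn x0\<close> times its \<open>W\<close>-energy.
On a compact space every signed Borel measure is a limit of finitely supported ones in a sense
strong enough to pass to the limit on both sides. The empty product gives
\<open>\<langle>\<mu>, \<mu>\<rangle>\<^sub>W \<ge> 0\<close>. If \<open>\<langle>\<mu>, \<mu>\<rangle>\<^sub>W = 0\<close>, then \<open>\<mu>\<close> annihilates \<open>w\<close> times the
algebra generated by the functions \<open>(z|_)\<close>; this algebra separates points, so by
Stone-Weierstrass \<open>\<mu>\<close> annihilates every continuous function, and therefore \<open>\<mu> = 0\<close>.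
\<close>

section \<open>Orthonormal expansions and Hadamard powers of Gram matrices\<close>

lemma inner_sum_orthonormal:
  fixes E :: "'a::real_inner set"
  assumes "finite E" "pairwise orthogonal E" "\<And>e. e \<in> E \<Longrightarrow> norm e = 1" "e0 \<in> E"
  shows "(\<Sum>e\<in>E. c e *\<^sub>R e) \<bullet> e0 = c e0"
proof -
  have "(\<Sum>e\<in>E. c e *\<^sub>R e) \<bullet> e0 = (\<Sum>e\<in>E. if e = e0 then c e0 else 0)"
    unfolding inner_sum_left
    using assms(2-4) by (intro sum.cong) (auto simp: pairwise_def orthogonal_def norm_eq_1)
  also have "\<dots> = c e0"
    using assms(1,4) by simp
  finally show ?thesis .
qed

lemma orthonormal_expansion_insert:
  fixes E :: "'a::real_inner set"
  assumes E: "finite E" "pairwise orthogonal E" "\<And>e. e \<in> E \<Longrightarrow> norm e = 1"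
    and e0: "norm e0 = 1" "\<And>e. e \<in> E \<Longrightarrow> e0 \<bullet> e = 0"
    and z: "z - (\<Sum>e\<in>E. (z \<bullet> e) *\<^sub>R e) = c *\<^sub>R e0"
  shows "z = (\<Sum>e\<in>insert e0 E. (z \<bullet> e) *\<^sub>R e)"
proof -
  have "e0 \<notin> E"
    using e0 by (metis inner_eq_zero_iff norm_zero zero_neq_one)
  have "(\<Sum>e\<in>E. (z \<bullet> e) *\<^sub>R e) \<bullet> e0 = 0"
    using e0(2) by (simp add: inner_sum_right inner_commute[of _ e0])
  then have "z \<bullet> e0 = c"
    using arg_cong[OF z, of "\<lambda>v. v \<bullet> e0"] e0(1) by (simp add: inner_diff_left dot_square_norm)
  then show ?thesis
    using z \<open>e0 \<notin> E\<close> E(1) by (simp add: algebra_simps)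
qed

lemma finite_set_orthonormal_expansion:
  fixes S :: "'a::real_inner set"
  assumes "finite S"
  shows "\<exists>E. finite E \<and> pairwise orthogonal E \<and> (\<forall>e\<in>E. norm e = 1) \<and>
           (\<forall>x\<in>S. x = (\<Sum>e\<in>E. (x \<bullet> e) *\<^sub>R e))"
  using assms
proof (induction S rule: finite_induct)
  case empty
  show ?case by (intro exI[of _ "{}"]) auto
next
  case (insert x S)
  then obtain E where E: "finite E" "pairwise orthogonal E" "\<And>e. e \<in> E \<Longrightarrow> norm e = 1"
    and S: "\<forall>z\<in>S. z = (\<Sum>e\<in>E. (z \<bullet> e) *\<^sub>R e)"
    by blast
  define r where "r = x - (\<Sum>e\<in>E. (x \<bullet> e) *\<^sub>R e)"
  show ?case
  proof (cases "r = 0")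
    case True
    then show ?thesis
      using E S by (intro exI[of _ E]) (auto simp: r_def)
  next
    case False
    define e0 where "e0 = r /\<^sub>R norm r"
    have e0: "norm e0 = 1" "\<And>e. e \<in> E \<Longrightarrow> e0 \<bullet> e = 0"
      using False inner_sum_orthonormal[OF E] by (auto simp: e0_def r_def inner_diff_left)
    have "z - (\<Sum>e\<in>E. (z \<bullet> e) *\<^sub>R e) = (if z = x then norm r else 0) *\<^sub>R e0"
      if "z \<in> insert x S" for z
      using that S False by (auto simp: e0_def r_def)
    then have "z = (\<Sum>e\<in>insert e0 E. (z \<bullet> e) *\<^sub>R e)" if "z \<in> insert x S" for z
      using orthonormal_expansion_insert[OF E e0] that by blast
    moreover have "pairwise orthogonal (insert e0 E)"
      using E(2) e0(2) by (auto simp: pairwise_insert orthogonal_def inner_commute)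
    ultimately show ?thesis
      using E e0(1) by (intro exI[of _ "insert e0 E"]) auto
  qed
qed

lemma finite_family_inner_expansion:
  fixes v :: "'c \<Rightarrow> 'a::real_inner"
  assumes "finite P"
  obtains E where "\<And>p u. p \<in> P \<Longrightarrow> u \<bullet> v p = (\<Sum>e\<in>E. (u \<bullet> e) * (v p \<bullet> e))"
proof -
  obtain E where E: "\<forall>x\<in>v ` P. x = (\<Sum>e\<in>E. (x \<bullet> e) *\<^sub>R e)"
    using finite_set_orthonormal_expansion[of "v ` P"] assms by blast
  have "u \<bullet> v p = (\<Sum>e\<in>E. (u \<bullet> e) * (v p \<bullet> e))" if "p \<in> P" for p u
  proof -
    have "u \<bullet> v p = u \<bullet> (\<Sum>e\<in>E. (v p \<bullet> e) *\<^sub>R e)"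
      using E that by simp
    then show ?thesis
      by (simp add: inner_sum_right mult.commute)
  qed
  then show ?thesis
    using that by blast
qed

definition gram_power_form :: "'c set \<Rightarrow> ('c \<Rightarrow> 'a::real_inner) \<Rightarrow> nat \<Rightarrow> ('c \<Rightarrow> real) \<Rightarrow> real" where
  "gram_power_form P v n b = (\<Sum>p\<in>P. \<Sum>q\<in>P. b p * b q * (v p \<bullet> v q) ^ n)"

lemma gram_power_form_0: "gram_power_form P v 0 b = (\<Sum>p\<in>P. b p)\<^sup>2"
  by (simp add: gram_power_form_def power2_eq_square sum_product)

lemma gram_power_form_Suc:
  assumes "\<And>p u. p \<in> P \<Longrightarrow> u \<bullet> v p = (\<Sum>e\<in>E. (u \<bullet> e) * (v p \<bullet> e))"
  shows "gram_power_form P v (Suc n) b = (\<Sum>e\<in>E. gram_power_form P v n (\<lambda>p. b p * (v p \<bullet> e)))"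
proof -
  have "gram_power_form P v (Suc n) b =
      (\<Sum>p\<in>P. \<Sum>q\<in>P. \<Sum>e\<in>E. (b p * (v p \<bullet> e)) * (b q * (v q \<bullet> e)) * (v p \<bullet> v q) ^ n)"
    unfolding gram_power_form_def
    by (intro sum.cong refl)
      (simp add: assms sum_distrib_left sum_distrib_right algebra_simps)
  also have "\<dots> = (\<Sum>e\<in>E. gram_power_form P v n (\<lambda>p. b p * (v p \<bullet> e)))"
    unfolding gram_power_form_def by (simp add: sum.swap[of _ E])
  finally show ?thesis .
qed

lemma gram_power_form_nonneg:
  assumes "finite P"
  shows "gram_power_form P v n b \<ge> 0"
proof -
  obtain E where E: "\<And>p u. p \<in> P \<Longrightarrow> u \<bullet> v p = (\<Sum>e\<in>E. (u \<bullet> e) * (v p \<bullet> e))"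
    using finite_family_inner_expansion[OF assms] by blast
  show ?thesis
  proof (induction n arbitrary: b)
    case 0
    show ?case by (simp add: gram_power_form_0)
  next
    case (Suc n)
    show ?case
      by (simp add: gram_power_form_Suc[OF E] sum_nonneg Suc.IH)
  qed
qed

lemma gram_power_form_Cauchy_Schwarz:
  fixes v :: "'c \<Rightarrow> 'a::real_inner"
  assumes "finite P"
  shows "(\<Sum>p\<in>P. b p * (\<Prod>a\<leftarrow>as. a \<bullet> v p))\<^sup>2 \<le> (\<Prod>a\<leftarrow>as. a \<bullet> a) * gram_power_form P v (length as) b"
proof -
  obtain E where E: "\<And>p u. p \<in> P \<Longrightarrow> u \<bullet> v p = (\<Sum>e\<in>E. (u \<bullet> e) * (v p \<bullet> e))"
    using finite_family_inner_expansion[OF assms] by blast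
  show ?thesis
  proof (induction as arbitrary: b)
    case Nil
    show ?case by (simp add: gram_power_form_0)
  next
    case (Cons a as)
    define Y where "Y = (\<Sum>p\<in>P. (b p * (\<Prod>a\<leftarrow>as. a \<bullet> v p)) *\<^sub>R v p)"
    have Y_e: "Y \<bullet> e = (\<Sum>p\<in>P. (b p * (v p \<bullet> e)) * (\<Prod>a\<leftarrow>as. a \<bullet> v p))" for e
      by (simp add: Y_def inner_sum_left mult_ac)
    have "Y \<bullet> Y = (\<Sum>p\<in>P. (b p * (\<Prod>a\<leftarrow>as. a \<bullet> v p)) * (Y \<bullet> v p))"
      by (subst (2) Y_def) (simp add: inner_sum_right)
    also have "\<dots> = (\<Sum>e\<in>E. (Y \<bullet> e)\<^sup>2)"
      by (simp add: E Y_e power2_eq_square sum_distrib_left sum_distrib_right sum.swap[of _ E] mult_ac)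
    also have "\<dots> \<le> (\<Sum>e\<in>E. (\<Prod>a\<leftarrow>as. a \<bullet> a) * gram_power_form P v (length as) (\<lambda>p. b p * (v p \<bullet> e)))"
      unfolding Y_e by (intro sum_mono Cons.IH)
    also have "\<dots> = (\<Prod>a\<leftarrow>as. a \<bullet> a) * gram_power_form P v (Suc (length as)) b"
      by (simp add: gram_power_form_Suc[OF E] sum_distrib_left)
    finally have YY: "Y \<bullet> Y \<le> (\<Prod>a\<leftarrow>as. a \<bullet> a) * gram_power_form P v (Suc (length as)) b" .
    have "(\<Sum>p\<in>P. b p * (\<Prod>a\<leftarrow>a # as. a \<bullet> v p))\<^sup>2 = (a \<bullet> Y)\<^sup>2"
      by (simp add: Y_def inner_sum_right mult_ac)
    also have "\<dots> \<le> (a \<bullet> a) * (Y \<bullet> Y)"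
      using Cauchy_Schwarz_ineq[of a Y] by (simp add: power2_eq_square)
    also have "\<dots> \<le> (a \<bullet> a) * ((\<Prod>a\<leftarrow>as. a \<bullet> a) * gram_power_form P v (Suc (length as)) b)"
      using YY by (intro mult_left_mono) auto
    finally show ?case by (simp add: mult.assoc)
  qed
qed

lemma gram_exp_form_bound:
  fixes v :: "'c \<Rightarrow> 'a::real_inner"
  assumes "finite P" "t \<ge> 0"
  shows "(\<Sum>p\<in>P. b p * (\<Prod>a\<leftarrow>as. a \<bullet> v p))\<^sup>2 * (t ^ length as / fact (length as))
     \<le> (\<Prod>a\<leftarrow>as. a \<bullet> a) * (\<Sum>p\<in>P. \<Sum>q\<in>P. b p * b q * exp (t * (v p \<bullet> v q)))"
proof -
  let ?term = "\<lambda>m. gram_power_form P v m b * (t ^ m / fact m)"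
  have "?term m = (\<Sum>p\<in>P. \<Sum>q\<in>P. b p * b q * ((t * (v p \<bullet> v q)) ^ m /\<^sub>R fact m))" for m
    by (simp add: gram_power_form_def sum_distrib_left power_mult_distrib divide_inverse mult_ac)
  moreover have "(\<lambda>m. \<Sum>p\<in>P. \<Sum>q\<in>P. b p * b q * ((t * (v p \<bullet> v q)) ^ m /\<^sub>R fact m))
      sums (\<Sum>p\<in>P. \<Sum>q\<in>P. b p * b q * exp (t * (v p \<bullet> v q)))"
    by (intro sums_sum sums_mult exp_converges)
  ultimately have sums: "?term sums (\<Sum>p\<in>P. \<Sum>q\<in>P. b p * b q * exp (t * (v p \<bullet> v q)))"
    by simp
  have "?term m \<ge> 0" for m
    using gram_power_form_nonneg[OF assms(1), of v m b] assms(2) by simp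
  then have "sum ?term {length as} \<le> suminf ?term"
    using sums by (intro sum_le_suminf) (auto simp: sums_iff)
  then have "?term (length as) \<le> (\<Sum>p\<in>P. \<Sum>q\<in>P. b p * b q * exp (t * (v p \<bullet> v q)))"
    using sums by (simp add: sums_iff)
  moreover have "(\<Prod>a\<leftarrow>as. a \<bullet> a) \<ge> 0"
    by (induction as) auto
  moreover have "(\<Sum>p\<in>P. b p * (\<Prod>a\<leftarrow>as. a \<bullet> v p))\<^sup>2 * (t ^ length as / fact (length as))
      \<le> (\<Prod>a\<leftarrow>as. a \<bullet> a) * ?term (length as)"
    using mult_right_mono[OF gram_power_form_Cauchy_Schwarz[OF assms(1)], of "t ^ length as / fact (length as)"]
      assms(2) by (simp add: mult.assoc)
  ultimately show ?thesis
    by (meson mult_left_mono order_trans)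
qed


section \<open>Gromov products and spaces of negative type\<close>

definition gromov_product :: "'a::metric_space \<Rightarrow> 'a \<Rightarrow> 'a \<Rightarrow> real" where
  "gromov_product x0 x y = (dist x x0 + dist y x0 - dist x y) / 2"

definition gromov_monomial :: "'a::metric_space \<Rightarrow> 'a list \<Rightarrow> 'a \<Rightarrow> real" where
  "gromov_monomial x0 zs x = (\<Prod>z\<leftarrow>zs. gromov_product x0 z x)"

lemma gromov_monomial_Nil [simp]: "gromov_monomial x0 [] x = 1"
  by (simp add: gromov_monomial_def)

lemma gromov_monomial_Cons [simp]:
  "gromov_monomial x0 (z # zs) x = gromov_product x0 z x * gromov_monomial x0 zs x"
  by (simp add: gromov_monomial_def)

lemma gromov_monomial_append:
  "gromov_monomial x0 (zs @ zs') x = gromov_monomial x0 zs x * gromov_monomial x0 zs' x"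
  by (induction zs) auto

lemma continuous_on_gromov_product: "continuous_on UNIV (gromov_product x0 z)"
  unfolding gromov_product_def[abs_def] by (intro continuous_intros) auto

lemma continuous_on_gromov_monomial: "continuous_on UNIV (gromov_monomial x0 zs)"
proof (induction zs)
  case (Cons z zs)
  then show ?case
    using continuous_on_mult[OF continuous_on_gromov_product] by simp
qed simp

lemma inner_negative_type_embedding:
  fixes \<phi> :: "'a::metric_space \<Rightarrow> 'b::real_inner"
  assumes "\<forall>x y. dist (\<phi> x) (\<phi> y) = sqrt (dist x y)"
  shows "(\<phi> x - \<phi> x0) \<bullet> (\<phi> y - \<phi> x0) = gromov_product x0 x y"
proof -
  have sq: "(norm (\<phi> x - \<phi> y))\<^sup>2 = dist x y" for x y
    using assms by (simp add: dist_norm[symmetric])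
  have "(norm ((\<phi> x - \<phi> x0) - (\<phi> y - \<phi> x0)))\<^sup>2
      = (norm (\<phi> x - \<phi> x0))\<^sup>2 + (norm (\<phi> y - \<phi> x0))\<^sup>2 - 2 * ((\<phi> x - \<phi> x0) \<bullet> (\<phi> y - \<phi> x0))"
    by (simp add: power2_norm_eq_inner inner_diff_left inner_diff_right inner_commute)
  then show ?thesis
    by (simp add: sq gromov_product_def)
qed

lemma negative_type_finite_moment_bound:
  fixes \<phi> :: "'a::metric_space \<Rightarrow> 'b::real_inner" and x0 :: 'a
  assumes "\<forall>x y. dist (\<phi> x) (\<phi> y) = sqrt (dist x y)" "finite P"
  shows "(\<Sum>p\<in>P. c p * (exp (- dist p x0) * gromov_monomial x0 zs p))\<^sup>2 * (2 ^ length zs / fact (length zs))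
     \<le> (\<Prod>z\<leftarrow>zs. dist z x0) * (\<Sum>p\<in>P. \<Sum>q\<in>P. c p * c q * exp (- dist p q))"
proof -
  define v where "v x = \<phi> x - \<phi> x0" for x
  have inner_v: "v x \<bullet> v y = gromov_product x0 x y" for x y
    unfolding v_def by (rule inner_negative_type_embedding[OF assms(1)])
  have "exp (- dist p x0) * exp (- dist q x0) * exp (2 * (v p \<bullet> v q)) = exp (- dist p q)" for p q
    by (simp add: inner_v gromov_product_def field_simps flip: exp_add)
  moreover have "(\<Prod>a\<leftarrow>map v zs. a \<bullet> v p) = gromov_monomial x0 zs p" for p
    by (simp add: gromov_monomial_def inner_v o_def)
  moreover have "(\<Prod>a\<leftarrow>map v zs. a \<bullet> a) = (\<Prod>z\<leftarrow>zs. dist z x0)"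
    by (simp add: inner_v gromov_product_def o_def)
  ultimately show ?thesis
    using gram_exp_form_bound[OF assms(2), where t=2 and b="\<lambda>p. c p * exp (- dist p x0)" and as="map v zs" and v=v]
    by (simp add: mult_ac)
qed


section \<open>Discretizing finite Borel measures on a compact metric space\<close>

lemma (in finite_measure) tendsto_integral_bounded:
  fixes f :: "nat \<Rightarrow> 'a \<Rightarrow> real"
  assumes "\<And>k. f k \<in> borel_measurable M" "g \<in> borel_measurable M"
    and "\<And>k x. x \<in> space M \<Longrightarrow> \<bar>f k x\<bar> \<le> B"
    and "\<And>x. x \<in> space M \<Longrightarrow> (\<lambda>k. f k x) \<longlonglongrightarrow> g x"
  shows "(\<lambda>k. \<integral>x. f k x \<partial>M) \<longlonglongrightarrow> (\<integral>x. g x \<partial>M)"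
  by (rule integral_dominated_convergence[where w = "\<lambda>_. B"]) (use assms in auto)

lemma (in finite_measure) abs_integral_le_const:
  fixes f :: "'a \<Rightarrow> real"
  assumes "f \<in> borel_measurable M" "\<And>x. x \<in> space M \<Longrightarrow> \<bar>f x\<bar> \<le> B"
  shows "\<bar>\<integral>x. f x \<partial>M\<bar> \<le> B * measure M (space M)"
proof -
  have "integrable M f"
    using assms by (intro integrable_const_bound[where B = B]) auto
  have "\<bar>\<integral>x. f x \<partial>M\<bar> \<le> (\<integral>x. \<bar>f x\<bar> \<partial>M)"
    using integral_norm_bound[of M f] by simp
  also have "\<dots> \<le> (\<integral>x. B \<partial>M)"
    using assms(2) \<open>integrable M f\<close> by (intro integral_mono) auto
  finally show ?thesis
    by (simp add: mult.commute)
qed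

lemma (in finite_measure) continuous_on_integral_parametric:
  fixes L :: "'b::metric_space \<Rightarrow> 'a \<Rightarrow> real"
  assumes "\<And>x. L x \<in> borel_measurable M"
    and "\<And>y. y \<in> space M \<Longrightarrow> continuous_on UNIV (\<lambda>x. L x y)"
    and "\<And>x y. y \<in> space M \<Longrightarrow> \<bar>L x y\<bar> \<le> B"
  shows "continuous_on UNIV (\<lambda>x. \<integral>y. L x y \<partial>M)"
proof (rule continuous_on_sequentiallyI)
  fix u :: "nat \<Rightarrow> 'b" and a assume "u \<longlonglongrightarrow> a"
  then have "(\<lambda>k. L (u k) y) \<longlonglongrightarrow> L a y" if "y \<in> space M" for y
    using continuous_on_tendsto_compose[OF assms(2)[OF that]] by simp
  then show "(\<lambda>k. \<integral>y. L (u k) y \<partial>M) \<longlonglongrightarrow> (\<integral>y. L a y \<partial>M)"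
    using assms(1,3) by (intro tendsto_integral_bounded[where B = B]) auto
qed

lemma (in finite_measure) has_bochner_integral_finite_range:
  fixes s :: "'a \<Rightarrow> 'b::t1_space" and g :: "'b \<Rightarrow> real"
  assumes "s \<in> M \<rightarrow>\<^sub>M borel" "finite P" "\<And>x. x \<in> space M \<Longrightarrow> s x \<in> P"
  shows "has_bochner_integral M (\<lambda>x. g (s x)) (\<Sum>p\<in>P. g p * measure M (s -` {p} \<inter> space M))"
proof -
  have sets: "s -` {p} \<inter> space M \<in> sets M" for p
    using measurable_sets[OF assms(1)] by (simp add: closed_singleton)
  have eq: "(\<Sum>p\<in>P. g p * indicator (s -` {p} \<inter> space M) x) = g (s x)" if "x \<in> space M" for x
  proof -
    have "(\<Sum>p\<in>P. g p * indicator (s -` {p} \<inter> space M) x) = (\<Sum>p\<in>P. if p = s x then g (s x) else 0)"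
      using that by (intro sum.cong) (auto simp: indicator_def)
    then show ?thesis
      using assms(2,3) that by simp
  qed
  have "has_bochner_integral M (\<lambda>x. \<Sum>p\<in>P. g p * indicator (s -` {p} \<inter> space M) x)
      (\<Sum>p\<in>P. g p * measure M (s -` {p} \<inter> space M))"
    using sets by (intro has_bochner_integral_sum has_bochner_integral_mult_right
        has_bochner_integral_real_indicator) (auto simp: less_top[symmetric])
  then show ?thesis
    using has_bochner_integral_cong[of M M "\<lambda>x. \<Sum>p\<in>P. g p * indicator (s -` {p} \<inter> space M) x"]
      eq by auto
qed

lemma integral_finite_range_borel:
  fixes s :: "'a::t1_space \<Rightarrow> 'a" and g :: "'a \<Rightarrow> real"
  assumes "finite_measure M" "sets M = sets borel"
    and "s \<in> borel \<rightarrow>\<^sub>M borel" "finite P" "\<And>x. s x \<in> P"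
  shows "(\<integral>x. g (s x) \<partial>M) = (\<Sum>p\<in>P. g p * measure M (s -` {p}))"
proof -
  have "s \<in> M \<rightarrow>\<^sub>M borel"
    using assms(3) by (simp add: measurable_cong_sets[OF assms(2) refl])
  then show ?thesis
    using finite_measure.has_bochner_integral_finite_range[OF assms(1) _ assms(4), of s g] assms(5)
      sets_eq_imp_space_eq[OF assms(2)] by (simp add: has_bochner_integral_iff)
qed

lemma double_integral_finite_range_borel:
  fixes s :: "'a::t1_space \<Rightarrow> 'a" and K :: "'a \<Rightarrow> 'a \<Rightarrow> real"
  assumes "finite_measure M" "sets M = sets borel" "finite_measure N" "sets N = sets borel"
    and "s \<in> borel \<rightarrow>\<^sub>M borel" "finite P" "\<And>x. s x \<in> P"
  shows "(\<integral>x. (\<integral>y. K (s x) (s y) \<partial>N) \<partial>M)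
    = (\<Sum>p\<in>P. \<Sum>q\<in>P. K p q * measure M (s -` {p}) * measure N (s -` {q}))"
proof -
  have "(\<integral>x. (\<integral>y. K (s x) (s y) \<partial>N) \<partial>M)
      = (\<integral>x. (\<Sum>q\<in>P. K (s x) q * measure N (s -` {q})) \<partial>M)"
    using integral_finite_range_borel[OF assms(3-7)] by simp
  also have "\<dots> = (\<Sum>p\<in>P. (\<Sum>q\<in>P. K p q * measure N (s -` {q})) * measure M (s -` {p}))"
    by (rule integral_finite_range_borel[OF assms(1,2,5-7)])
  finally show ?thesis
    by (simp add: sum_distrib_left mult_ac)
qed

lemma LIMSEQ_dist_less_inverse_Suc:
  assumes "\<And>k. dist (a k) l < inverse (real (Suc k))"
  shows "a \<longlonglongrightarrow> l"
proof (rule tendsto_dist_iff[THEN iffD2])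
  show "(\<lambda>k. dist (a k) l) \<longlonglongrightarrow> 0"
    using assms by (intro tendsto_sandwich[OF _ _ tendsto_const LIMSEQ_inverse_real_of_nat]
        always_eventually allI) (auto intro: less_imp_le)
qed

fun first_within :: "real \<Rightarrow> 'a::metric_space list \<Rightarrow> 'a \<Rightarrow> 'a" where
  "first_within d [] x = x"
| "first_within d (p # ps) x = (if dist p x < d then p else first_within d ps x)"

lemma first_within_covered:
  assumes "x \<in> (\<Union>p\<in>set ps. ball p d)"
  shows "first_within d ps x \<in> set ps" "dist (first_within d ps x) x < d"
  using assms by (induction ps) auto

lemma measurable_first_within: "first_within d ps \<in> borel \<rightarrow>\<^sub>M borel"
proof (induction ps)
  case (Cons p ps)
  have "{x \<in> space borel. dist p x < d} \<in> sets borel"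
    using borel_open[OF open_ball[of p d]] by (simp add: ball_def)
  then show ?case
    using Cons by (simp add: measurable_If)
qed simp

lemma compact_finite_quantizer:
  assumes "compact (UNIV :: 'a::metric_space set)" "d > 0"
  shows "\<exists>(s :: 'a \<Rightarrow> 'a) P. finite P \<and> s \<in> borel \<rightarrow>\<^sub>M borel \<and> (\<forall>x. s x \<in> P \<and> dist (s x) x < d)"
proof -
  have "\<forall>\<epsilon>>0. \<exists>C. finite C \<and> (UNIV :: 'a set) \<subseteq> (\<Union>c\<in>C. ball c \<epsilon>)"
    using assms(1) by (rule conjunct2[OF iffD1[OF compact_eq_totally_bounded]])
  then obtain C :: "'a set" where "finite C" "UNIV \<subseteq> (\<Union>c\<in>C. ball c d)"
    using assms(2) by meson
  moreover obtain ps where "set ps = C"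
    using finite_list[OF \<open>finite C\<close>] by blast
  ultimately show ?thesis
    using first_within_covered[where ps = ps and d = d] measurable_first_within[of d ps]
    by (intro exI[of _ "first_within d ps"] exI[of _ C]) blast
qed

lemma compact_quantizer_sequence:
  assumes "compact (UNIV :: 'a set)"
  obtains P and s :: "nat \<Rightarrow> 'a::metric_space \<Rightarrow> 'a"
  where "\<And>k. finite (P k)" "\<And>k. s k \<in> borel \<rightarrow>\<^sub>M borel" "\<And>k x. s k x \<in> P k"
    "\<And>x. (\<lambda>k. s k x) \<longlonglongrightarrow> x"
proof -
  have "\<forall>k. \<exists>(s :: 'a \<Rightarrow> 'a) P. finite P \<and> s \<in> borel \<rightarrow>\<^sub>M borel \<and>
      (\<forall>x. s x \<in> P \<and> dist (s x) x < inverse (real (Suc k)))"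
    by (intro allI compact_finite_quantizer[OF assms]) simp
  then obtain s :: "nat \<Rightarrow> 'a \<Rightarrow> 'a" and P where sP: "\<And>k. finite (P k)" "\<And>k. s k \<in> borel \<rightarrow>\<^sub>M borel"
    "\<And>k x. s k x \<in> P k" "\<And>k x. dist (s k x) x < inverse (real (Suc k))"
    unfolding choice_iff by blast
  have conv: "(\<lambda>k. s k x) \<longlonglongrightarrow> x" for x
    using sP(4) by (rule LIMSEQ_dist_less_inverse_Suc)
  show ?thesis
    by (rule that[OF sP(1-3) conv])
qed

lemma compact_continuous_bounded:
  fixes f :: "'a::topological_space \<Rightarrow> real"
  assumes "compact (UNIV :: 'a set)" "continuous_on UNIV f"
  obtains B where "\<And>x. \<bar>f x\<bar> \<le> B"
proof -
  have "bounded (range f)"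
    using compact_imp_bounded[OF compact_continuous_image[OF assms(2,1)]] .
  then show ?thesis
    using that by (auto simp: bounded_iff)
qed

lemma tendsto_integral_quantized:
  fixes F :: "'a::metric_space \<Rightarrow> real"
  assumes "finite_measure M" "sets M = sets borel" "continuous_on UNIV F" "\<And>x. \<bar>F x\<bar> \<le> B"
    and "\<And>k. s k \<in> borel \<rightarrow>\<^sub>M borel" "\<And>x. (\<lambda>k. s k x) \<longlonglongrightarrow> x"
  shows "(\<lambda>k. \<integral>x. F (s k x) \<partial>M) \<longlonglongrightarrow> (\<integral>x. F x \<partial>M)"
proof -
  interpret finite_measure M by fact
  have meas: "borel_measurable M = borel_measurable borel"
    by (rule measurable_cong_sets[OF assms(2) refl])
  have F: "F \<in> borel_measurable borel"
    using assms(3) by (rule borel_measurable_continuous_onI)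
  show ?thesis
  proof (rule tendsto_integral_bounded[where B = B])
    show "(\<lambda>x. F (s k x)) \<in> borel_measurable M" for k
      using measurable_compose[OF assms(5) F] by (simp add: meas)
    show "F \<in> borel_measurable M"
      using F by (simp add: meas)
    show "(\<lambda>k. F (s k x)) \<longlonglongrightarrow> F x" for x
      using continuous_on_tendsto_compose[OF assms(3) assms(6)] by simp
  qed (use assms(4) in auto)
qed

lemma tendsto_double_integral_quantized:
  fixes K :: "'a::metric_space \<Rightarrow> 'a \<Rightarrow> real"
  assumes M: "finite_measure M" "sets M = sets borel" and N: "finite_measure N" "sets N = sets borel"
    and K: "continuous_on UNIV (\<lambda>(x, y). K x y)" "\<And>x y. \<bar>K x y\<bar> \<le> B"
    and s: "\<And>k. s k \<in> borel \<rightarrow>\<^sub>M borel" "\<And>x. (\<lambda>k. s k x) \<longlonglongrightarrow> x"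
  shows "(\<lambda>k. \<integral>x. (\<integral>y. K (s k x) (s k y) \<partial>N) \<partial>M) \<longlonglongrightarrow> (\<integral>x. (\<integral>y. K x y \<partial>N) \<partial>M)"
proof -
  interpret M: finite_measure M by fact
  interpret N: finite_measure N by fact
  have measM: "borel_measurable M = borel_measurable borel"
    by (rule measurable_cong_sets[OF M(2) refl])
  have measN: "borel_measurable N = borel_measurable borel"
    by (rule measurable_cong_sets[OF N(2) refl])
  have K_tendsto: "(\<lambda>k. K (f k) (g k)) \<longlonglongrightarrow> K x y" if "f \<longlonglongrightarrow> x" "g \<longlonglongrightarrow> y"
    for f g :: "nat \<Rightarrow> 'a" and x y
    using continuous_on_tendsto_compose[OF K(1) tendsto_Pair[OF that]] by simp
  have K_cont: "continuous_on UNIV (\<lambda>x. K x y)" "continuous_on UNIV (\<lambda>y. K x y)" for x y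
    using K_tendsto[OF _ tendsto_const] K_tendsto[OF tendsto_const]
    by (auto intro: continuous_on_sequentiallyI)
  have K_meas: "(\<lambda>y. K x (t y)) \<in> borel_measurable N" if "t \<in> borel \<rightarrow>\<^sub>M borel" for x t
    using measurable_compose[OF that borel_measurable_continuous_onI[OF K_cont(2)]] by (simp add: measN)
  \<comment> \<open>Measurability of the inner integrals comes from continuity, not from Fubini: for a general
    metric space the Borel sets of the square need not be generated by Borel rectangles.\<close>
  have inner_cont: "continuous_on UNIV (\<lambda>x. \<integral>y. K x (t y) \<partial>N)" if "t \<in> borel \<rightarrow>\<^sub>M borel" for t
    using K(2) K_meas[OF that] K_cont(1) by (intro N.continuous_on_integral_parametric[where B = B]) auto
  show ?thesis
  proof (rule M.tendsto_integral_bounded[where B = "B * measure N (space N)"])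
    show "(\<lambda>x. \<integral>y. K (s k x) (s k y) \<partial>N) \<in> borel_measurable M" for k
      using measurable_compose[OF s(1) borel_measurable_continuous_onI[OF inner_cont[OF s(1)]]]
      by (simp add: measM)
    show "(\<lambda>x. \<integral>y. K x y \<partial>N) \<in> borel_measurable M"
      using borel_measurable_continuous_onI[OF inner_cont[OF measurable_ident]] by (simp add: measM)
    show "\<bar>\<integral>y. K (s k x) (s k y) \<partial>N\<bar> \<le> B * measure N (space N)" for k x
      using K(2) K_meas[OF s(1)] by (intro N.abs_integral_le_const) auto
    show "(\<lambda>k. \<integral>y. K (s k x) (s k y) \<partial>N) \<longlonglongrightarrow> (\<integral>y. K x y \<partial>N)" for x
      using K(2) K_meas[OF s(1)] K_meas[OF measurable_ident] K_tendsto[OF s(2) s(2)]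
      by (intro N.tendsto_integral_bounded[where B = B]) auto
  qed
qed

lemma tendsto_signed_sum_quantized:
  fixes M1 M2 :: "'a::metric_space measure" and F :: "'a \<Rightarrow> real"
  assumes "compact (UNIV :: 'a set)"
    and M1: "finite_measure M1" "sets M1 = sets borel" and M2: "finite_measure M2" "sets M2 = sets borel"
    and s: "\<And>k. s k \<in> borel \<rightarrow>\<^sub>M borel" "\<And>k. finite (P k)" "\<And>k x. s k x \<in> P k"
      "\<And>x. (\<lambda>k. s k x) \<longlonglongrightarrow> x"
    and F: "continuous_on UNIV F"
  shows "(\<lambda>k. \<Sum>p\<in>P k. (measure M1 (s k -` {p}) - measure M2 (s k -` {p})) * F p)
    \<longlonglongrightarrow> (\<integral>x. F x \<partial>M1) - (\<integral>x. F x \<partial>M2)"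
proof -
  obtain B where "\<And>x. \<bar>F x\<bar> \<le> B"
    using compact_continuous_bounded[OF assms(1) F] by blast
  then have "(\<lambda>k. (\<integral>x. F (s k x) \<partial>M1) - (\<integral>x. F (s k x) \<partial>M2)) \<longlonglongrightarrow> (\<integral>x. F x \<partial>M1) - (\<integral>x. F x \<partial>M2)"
    using F s(1,4) by (intro tendsto_diff tendsto_integral_quantized[OF M1] tendsto_integral_quantized[OF M2])
  then show ?thesis
    by (simp add: integral_finite_range_borel[OF M1 s(1-3)] integral_finite_range_borel[OF M2 s(1-3)]
        algebra_simps sum_subtractf)
qed

lemma tendsto_W_signed_sq_quantized:
  fixes M1 M2 :: "'a::metric_space measure"
  assumes M1: "finite_measure M1" "sets M1 = sets borel" and M2: "finite_measure M2" "sets M2 = sets borel"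
    and s: "\<And>k. s k \<in> borel \<rightarrow>\<^sub>M borel" "\<And>k. finite (P k)" "\<And>k x. s k x \<in> P k"
      "\<And>x. (\<lambda>k. s k x) \<longlonglongrightarrow> x"
  shows "(\<lambda>k. \<Sum>p\<in>P k. \<Sum>q\<in>P k. (measure M1 (s k -` {p}) - measure M2 (s k -` {p}))
      * (measure M1 (s k -` {q}) - measure M2 (s k -` {q})) * exp (- dist p q)) \<longlonglongrightarrow> W_signed_sq M1 M2"
proof -
  let ?K = "\<lambda>x y :: 'a. exp (- dist x y)"
  let ?D = "\<lambda>M N k. \<Sum>p\<in>P k. \<Sum>q\<in>P k. ?K p q * measure M (s k -` {p}) * measure N (s k -` {q})"
  have "continuous_on UNIV (\<lambda>(x, y). ?K x y)"
    by (simp add: case_prod_beta' continuous_intros)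
  then have "(\<lambda>k. ?D M N k) \<longlonglongrightarrow> W_inner M N"
    if "finite_measure M" "sets M = sets borel" "finite_measure N" "sets N = sets borel" for M N
    using tendsto_double_integral_quantized[OF that _ _ s(1,4), where B = 1]
    by (simp add: W_inner_def double_integral_finite_range_borel[OF that s(1-3)])
  then have "(\<lambda>k. ?D M1 M1 k - ?D M1 M2 k - ?D M2 M1 k + ?D M2 M2 k) \<longlonglongrightarrow> W_signed_sq M1 M2"
    unfolding W_signed_sq_def using M1 M2 by (intro tendsto_add tendsto_diff) auto
  then show ?thesis
    by (simp add: algebra_simps sum_subtractf sum.distrib)
qed

lemma compact_discrete_approximation:
  fixes M1 M2 :: "'a::metric_space measure"
  assumes "compact (UNIV :: 'a set)"
    and M1: "finite_measure M1" "sets M1 = sets borel"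
    and M2: "finite_measure M2" "sets M2 = sets borel"
  obtains P :: "nat \<Rightarrow> 'a set" and c :: "nat \<Rightarrow> 'a \<Rightarrow> real"
  where "\<And>k. finite (P k)"
    "\<And>F. continuous_on UNIV F \<Longrightarrow> (\<lambda>k. \<Sum>p\<in>P k. c k p * F p) \<longlonglongrightarrow> (\<integral>x. F x \<partial>M1) - (\<integral>x. F x \<partial>M2)"
    "(\<lambda>k. \<Sum>p\<in>P k. \<Sum>q\<in>P k. c k p * c k q * exp (- dist p q)) \<longlonglongrightarrow> W_signed_sq M1 M2"
proof -
  obtain P and s :: "nat \<Rightarrow> 'a \<Rightarrow> 'a" where s: "\<And>k. finite (P k)" "\<And>k. s k \<in> borel \<rightarrow>\<^sub>M borel"
    "\<And>k x. s k x \<in> P k" "\<And>x. (\<lambda>k. s k x) \<longlonglongrightarrow> x"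
    using compact_quantizer_sequence[OF assms(1)] by blast
  show ?thesis
  proof
    show "finite (P k)" for k
      by (rule s(1))
    show "(\<lambda>k. \<Sum>p\<in>P k. (measure M1 (s k -` {p}) - measure M2 (s k -` {p})) * F p)
        \<longlonglongrightarrow> (\<integral>x. F x \<partial>M1) - (\<integral>x. F x \<partial>M2)" if "continuous_on UNIV F" for F
      by (rule tendsto_signed_sum_quantized[OF assms s(2,1,3,4) that])
    show "(\<lambda>k. \<Sum>p\<in>P k. \<Sum>q\<in>P k. (measure M1 (s k -` {p}) - measure M2 (s k -` {p}))
        * (measure M1 (s k -` {q}) - measure M2 (s k -` {q})) * exp (- dist p q)) \<longlonglongrightarrow> W_signed_sq M1 M2"
      by (rule tendsto_W_signed_sq_quantized[OF M1 M2 s(2,1,3,4)])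
  qed
qed


section \<open>Finite Borel measures are determined by integrals of continuous functions\<close>

lemma integrable_continuous_compact:
  fixes f :: "'a::topological_space \<Rightarrow> real"
  assumes "compact (UNIV :: 'a set)" "finite_measure M" "sets M = sets borel" "continuous_on UNIV f"
  shows "integrable M f"
proof -
  obtain B where "\<And>x. \<bar>f x\<bar> \<le> B"
    using compact_continuous_bounded[OF assms(1,4)] by blast
  moreover have "f \<in> borel_measurable M"
    using borel_measurable_continuous_onI[OF assms(4)] by (simp add: measurable_cong_sets[OF assms(3) refl])
  ultimately show ?thesis
    by (auto intro: finite_measure.integrable_const_bound[OF assms(2), where B = B])
qed

lemma (in function_ring_on) Stone_Weierstrass_sequence:
  assumes "continuous_on S f"
  obtains F where "\<And>k. F k \<in> R" "\<And>k x. x \<in> S \<Longrightarrow> \<bar>f x - F k x\<bar> < inverse (real (Suc k))"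
proof -
  have "\<forall>k. \<exists>g\<in>R. \<forall>x\<in>S. \<bar>f x - g x\<bar> < inverse (real (Suc k))"
    using Stone_Weierstrass_basic[OF assms] by simp
  then show ?thesis
    using that unfolding Bex_def choice_iff by blast
qed

lemma tendsto_integral_weighted_approx:
  fixes w h :: "'a::topological_space \<Rightarrow> real" and f :: "nat \<Rightarrow> 'a \<Rightarrow> real"
  assumes "compact (UNIV :: 'a set)" "finite_measure M" "sets M = sets borel"
    and w: "continuous_on UNIV w" and h: "continuous_on UNIV h" and f: "\<And>k. continuous_on UNIV (f k)"
    and approx: "\<And>k x. \<bar>h x - f k x\<bar> < inverse (real (Suc k))"
  shows "(\<lambda>k. \<integral>x. w x * f k x \<partial>M) \<longlonglongrightarrow> (\<integral>x. w x * h x \<partial>M)"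
proof -
  obtain Bw where Bw: "\<And>x. \<bar>w x\<bar> \<le> Bw"
    using compact_continuous_bounded[OF assms(1) w] by blast
  obtain Bh where Bh: "\<And>x. \<bar>h x\<bar> \<le> Bh"
    using compact_continuous_bounded[OF assms(1) h] by blast
  have meas: "borel_measurable M = borel_measurable borel"
    by (rule measurable_cong_sets[OF assms(3) refl])
  show ?thesis
  proof (rule finite_measure.tendsto_integral_bounded[OF assms(2), where B = "Bw * (Bh + 1)"])
    show "(\<lambda>x. w x * f k x) \<in> borel_measurable M" for k
      using w f by (simp add: meas borel_measurable_continuous_onI continuous_on_mult)
    show "(\<lambda>x. w x * h x) \<in> borel_measurable M"
      using w h by (simp add: meas borel_measurable_continuous_onI continuous_on_mult)
    show "\<bar>w x * f k x\<bar> \<le> Bw * (Bh + 1)" for k x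
    proof -
      have "inverse (real (Suc k)) \<le> 1"
        by (simp add: field_simps)
      then have "\<bar>f k x\<bar> \<le> Bh + 1"
        using approx[of x k] Bh[of x] by linarith
      then show ?thesis
        using Bw[of x] by (simp add: abs_mult mult_mono')
    qed
    show "(\<lambda>k. w x * f k x) \<longlonglongrightarrow> w x * h x" for x
      using approx by (intro tendsto_mult_left LIMSEQ_dist_less_inverse_Suc)
        (simp add: dist_real_def abs_minus_commute)
  qed
qed

lemma integral_eq_continuous_if_dense_weighted:
  fixes M1 M2 :: "'a::metric_space measure" and w g :: "'a \<Rightarrow> real"
  assumes "function_ring_on A UNIV"
    and M1: "finite_measure M1" "sets M1 = sets borel" and M2: "finite_measure M2" "sets M2 = sets borel"
    and w: "continuous_on UNIV w" "\<And>x. w x > 0"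
    and A: "\<And>f. f \<in> A \<Longrightarrow> (\<integral>x. w x * f x \<partial>M1) = (\<integral>x. w x * f x \<partial>M2)"
    and g: "continuous_on UNIV g"
  shows "(\<integral>x. g x \<partial>M1) = (\<integral>x. g x \<partial>M2)"
proof -
  interpret function_ring_on A UNIV by fact
  have g_w: "continuous_on UNIV (\<lambda>x. g x / w x)"
    using g w by (intro continuous_intros) (auto simp: less_imp_neq[symmetric])
  then obtain f where f: "\<And>k. f k \<in> A" "\<And>k x. \<bar>g x / w x - f k x\<bar> < inverse (real (Suc k))"
    by (rule Stone_Weierstrass_sequence) auto
  have "(\<lambda>k. \<integral>x. w x * f k x \<partial>M) \<longlonglongrightarrow> (\<integral>x. g x \<partial>M)" if "finite_measure M" "sets M = sets borel" for M
    using tendsto_integral_weighted_approx[OF compact that w(1) g_w continuous[OF f(1)] f(2)] w(2)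
    by (simp add: less_imp_neq[symmetric])
  moreover have "(\<lambda>k. \<integral>x. w x * f k x \<partial>M1) = (\<lambda>k. \<integral>x. w x * f k x \<partial>M2)"
    using A[OF f(1)] by simp
  ultimately show ?thesis
    using LIMSEQ_unique M1 M2 by metis
qed

lemma tendsto_infdist_cutoff_indicator:
  assumes "closed C" "C \<noteq> {}"
  shows "(\<lambda>k. max 0 (1 - real k * infdist x C)) \<longlonglongrightarrow> indicator C x"
proof (cases "x \<in> C")
  case False
  then have "infdist x C > 0"
    using in_closed_iff_infdist_zero[OF assms, of x] infdist_nonneg[of x C] by linarith
  then obtain N where N: "1 < real N * infdist x C"
    using ex_less_of_nat_mult by blast
  have "max 0 (1 - real k * infdist x C) = 0" if "N \<le> k" for k
    using N mult_right_mono[of "real N" "real k" "infdist x C"] that by (simp add: infdist_nonneg)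
  then have "(\<lambda>k. max 0 (1 - real k * infdist x C)) \<longlonglongrightarrow> 0"
    by (intro tendsto_eventually eventually_sequentiallyI)
  with False show ?thesis
    by simp
qed simp

lemma tendsto_integral_infdist_cutoff:
  fixes M :: "'a::metric_space measure"
  assumes "finite_measure M" "sets M = sets borel" "closed C" "C \<noteq> {}"
  shows "(\<lambda>k. \<integral>x. max 0 (1 - real k * infdist x C) \<partial>M) \<longlonglongrightarrow> measure M C"
proof -
  have meas: "borel_measurable M = borel_measurable borel"
    by (rule measurable_cong_sets[OF assms(2) refl])
  have "(\<lambda>k. \<integral>x. max 0 (1 - real k * infdist x C) \<partial>M) \<longlonglongrightarrow> (\<integral>x. indicator C x \<partial>M)"
  proof (rule finite_measure.tendsto_integral_bounded[OF assms(1), where B = 1])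
    show "(\<lambda>x. max 0 (1 - real k * infdist x C)) \<in> borel_measurable M" for k
      by (simp add: meas borel_measurable_continuous_onI continuous_intros)
    show "indicator C \<in> borel_measurable M"
      using assms(3) by (simp add: meas)
    show "\<bar>max 0 (1 - real k * infdist x C)\<bar> \<le> 1" for k x
      by (simp add: infdist_nonneg)
    show "(\<lambda>k. max 0 (1 - real k * infdist x C)) \<longlonglongrightarrow> indicator C x" for x
      by (rule tendsto_infdist_cutoff_indicator[OF assms(3,4)])
  qed
  then show ?thesis
    using sets_eq_imp_space_eq[OF assms(2)] by simp
qed

lemma finite_measure_eq_if_integrals_continuous_eq:
  fixes M1 M2 :: "'a::metric_space measure"
  assumes M1: "finite_measure M1" "sets M1 = sets borel" and M2: "finite_measure M2" "sets M2 = sets borel"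
    and eq: "\<And>g :: 'a \<Rightarrow> real. continuous_on UNIV g \<Longrightarrow> (\<integral>x. g x \<partial>M1) = (\<integral>x. g x \<partial>M2)"
  shows "M1 = M2"
proof -
  have measure_closed: "measure M1 C = measure M2 C" if "closed C" "C \<noteq> {}" for C
  proof -
    have "(\<lambda>k. \<integral>x. max 0 (1 - real k * infdist x C) \<partial>M1) = (\<lambda>k. \<integral>x. max 0 (1 - real k * infdist x C) \<partial>M2)"
      by (intro ext eq continuous_intros)
    then show ?thesis
      using LIMSEQ_unique[OF tendsto_integral_infdist_cutoff[OF M1 that]]
        tendsto_integral_infdist_cutoff[OF M2 that] by simp
  qed
  show ?thesis
  proof (rule measure_eqI_generator_eq[where E = "Collect closed" and \<Omega> = UNIV and A = "\<lambda>_. UNIV"])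
    show "Int_stable (Collect closed)"
      by (auto simp: Int_stable_def)
    show "sets M1 = sigma_sets UNIV (Collect closed)" "sets M2 = sigma_sets UNIV (Collect closed)"
      using M1(2) M2(2) by (simp_all add: borel_eq_closed)
    show "emeasure M1 X = emeasure M2 X" if "X \<in> Collect closed" for X
      using that measure_closed[of X] M1(1) M2(1)
      by (cases "X = {}") (auto simp: finite_measure.emeasure_eq_measure)
    show "emeasure M1 UNIV \<noteq> \<infinity>"
      using M1(1) by (simp add: finite_measure.emeasure_finite)
  qed auto
qed


lemma negative_type_moment_bound:
  fixes \<phi> :: "'a::metric_space \<Rightarrow> 'b::real_inner" and x0 :: 'a and M1 M2 :: "'a measure"
  assumes "compact (UNIV :: 'a set)" and neg: "\<forall>x y. dist (\<phi> x) (\<phi> y) = sqrt (dist x y)"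
    and M1: "finite_measure M1" "sets M1 = sets borel"
    and M2: "finite_measure M2" "sets M2 = sets borel"
  shows "((\<integral>x. exp (- dist x x0) * gromov_monomial x0 zs x \<partial>M1)
          - (\<integral>x. exp (- dist x x0) * gromov_monomial x0 zs x \<partial>M2))\<^sup>2 * (2 ^ length zs / fact (length zs))
     \<le> (\<Prod>z\<leftarrow>zs. dist z x0) * W_signed_sq M1 M2"
proof -
  let ?F = "\<lambda>x. exp (- dist x x0) * gromov_monomial x0 zs x"
  have F: "continuous_on UNIV ?F"
    by (intro continuous_intros continuous_on_gromov_monomial)
  obtain P c where P: "\<And>k. finite (P k)"
    and F_lim: "\<And>F. continuous_on UNIV F
      \<Longrightarrow> (\<lambda>k. \<Sum>p\<in>P k. c k p * F p) \<longlonglongrightarrow> (\<integral>x. F x \<partial>M1) - (\<integral>x. F x \<partial>M2)"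
    and W_lim: "(\<lambda>k. \<Sum>p\<in>P k. \<Sum>q\<in>P k. c k p * c k q * exp (- dist p q)) \<longlonglongrightarrow> W_signed_sq M1 M2"
    using compact_discrete_approximation[OF assms(1) M1 M2] by blast
  show ?thesis
  proof (rule LIMSEQ_le)
    show "(\<lambda>k. (\<Sum>p\<in>P k. c k p * ?F p)\<^sup>2 * (2 ^ length zs / fact (length zs)))
        \<longlonglongrightarrow> ((\<integral>x. ?F x \<partial>M1) - (\<integral>x. ?F x \<partial>M2))\<^sup>2 * (2 ^ length zs / fact (length zs))"
      by (intro tendsto_intros F_lim[OF F])
    show "(\<lambda>k. (\<Prod>z\<leftarrow>zs. dist z x0) * (\<Sum>p\<in>P k. \<Sum>q\<in>P k. c k p * c k q * exp (- dist p q)))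
        \<longlonglongrightarrow> (\<Prod>z\<leftarrow>zs. dist z x0) * W_signed_sq M1 M2"
      by (intro tendsto_intros W_lim)
    show "\<exists>N. \<forall>k\<ge>N. (\<Sum>p\<in>P k. c k p * ?F p)\<^sup>2 * (2 ^ length zs / fact (length zs))
        \<le> (\<Prod>z\<leftarrow>zs. dist z x0) * (\<Sum>p\<in>P k. \<Sum>q\<in>P k. c k p * c k q * exp (- dist p q))"
      by (intro exI[of _ 0] allI impI negative_type_finite_moment_bound[OF neg P])
  qed
qed

lemma negative_type_W_signed_sq_nonneg:
  fixes \<phi> :: "'a::metric_space \<Rightarrow> 'b::real_inner" and M1 M2 :: "'a measure"
  assumes "compact (UNIV :: 'a set)" "\<forall>x y. dist (\<phi> x) (\<phi> y) = sqrt (dist x y)"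
    and "finite_measure M1" "sets M1 = sets borel" "finite_measure M2" "sets M2 = sets borel"
  shows "W_signed_sq M1 M2 \<ge> 0"
proof -
  have "((\<integral>x. exp (- dist x x0) \<partial>M1) - (\<integral>x. exp (- dist x x0) \<partial>M2))\<^sup>2 \<le> W_signed_sq M1 M2"
    for x0 :: 'a
    using negative_type_moment_bound[OF assms, of x0 "[]"] by simp
  then show ?thesis
    by (meson order_trans zero_le_power2)
qed

lemma negative_type_moments_eq:
  fixes \<phi> :: "'a::metric_space \<Rightarrow> 'b::real_inner" and x0 :: 'a and M1 M2 :: "'a measure"
  assumes "compact (UNIV :: 'a set)" "\<forall>x y. dist (\<phi> x) (\<phi> y) = sqrt (dist x y)"
    and "finite_measure M1" "sets M1 = sets borel" "finite_measure M2" "sets M2 = sets borel"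
    and "W_signed_sq M1 M2 = 0"
  shows "(\<integral>x. exp (- dist x x0) * gromov_monomial x0 zs x \<partial>M1)
       = (\<integral>x. exp (- dist x x0) * gromov_monomial x0 zs x \<partial>M2)"
proof -
  define d where "d = (\<integral>x. exp (- dist x x0) * gromov_monomial x0 zs x \<partial>M1)
    - (\<integral>x. exp (- dist x x0) * gromov_monomial x0 zs x \<partial>M2)"
  have "d\<^sup>2 * (2 ^ length zs / fact (length zs)) \<le> 0 * (2 ^ length zs / fact (length zs))"
    using negative_type_moment_bound[OF assms(1-6), of x0 zs] assms(7) by (simp add: d_def)
  then have "d\<^sup>2 \<le> 0"
    by (subst (asm) mult_le_cancel_right_pos) auto
  then show ?thesis
    by (simp add: d_def)
qed

inductive_set gromov_polynomials :: "'a::metric_space \<Rightarrow> ('a \<Rightarrow> real) set" for x0 :: 'a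
where
  monomial: "gromov_monomial x0 zs \<in> gromov_polynomials x0"
| add: "f \<in> gromov_polynomials x0 \<Longrightarrow> g \<in> gromov_polynomials x0 \<Longrightarrow> (\<lambda>x. f x + g x) \<in> gromov_polynomials x0"
| scale: "f \<in> gromov_polynomials x0 \<Longrightarrow> (\<lambda>x. c * f x) \<in> gromov_polynomials x0"

lemma gromov_polynomials_mult_monomial:
  assumes "g \<in> gromov_polynomials x0"
  shows "(\<lambda>x. gromov_monomial x0 zs x * g x) \<in> gromov_polynomials x0"
  using assms
proof induction
  case (monomial zs')
  then show ?case
    using gromov_polynomials.monomial[of x0 "zs @ zs'"] by (simp add: gromov_monomial_append[abs_def])
next
  case (add f g)
  then show ?case
    using gromov_polynomials.add by (simp add: distrib_left)
next
  case (scale f c)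
  then show ?case
    using gromov_polynomials.scale[of _ x0 c] by (simp add: mult.left_commute)
qed

lemma gromov_polynomials_mult:
  assumes "f \<in> gromov_polynomials x0" "g \<in> gromov_polynomials x0"
  shows "(\<lambda>x. f x * g x) \<in> gromov_polynomials x0"
  using assms
proof induction
  case (monomial zs)
  then show ?case
    by (rule gromov_polynomials_mult_monomial)
next
  case (add f1 f2)
  then show ?case
    using gromov_polynomials.add by (simp add: distrib_right)
next
  case (scale f c)
  then show ?case
    using gromov_polynomials.scale[of _ x0 c] by (simp add: mult.assoc)
qed

lemma continuous_on_gromov_polynomial:
  "f \<in> gromov_polynomials x0 \<Longrightarrow> continuous_on UNIV f"
  by (induction rule: gromov_polynomials.induct) (auto intro!: continuous_intros continuous_on_gromov_monomial)

lemma gromov_polynomials_function_ring: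
  assumes "compact (UNIV :: 'a::metric_space set)"
  shows "function_ring_on (gromov_polynomials (x0 :: 'a)) UNIV"
proof
  show "(\<lambda>_. c) \<in> gromov_polynomials x0" for c
    using gromov_polynomials.scale[OF gromov_polynomials.monomial[of x0 "[]"], of c] by simp
  show "\<exists>f\<in>gromov_polynomials x0. f x \<noteq> f y" if "x \<noteq> y" for x y
  proof (rule ccontr)
    assume "\<not> ?thesis"
    then have "gromov_monomial x0 [z] x = gromov_monomial x0 [z] y" for z
      using gromov_polynomials.monomial by blast
    then have "gromov_product x0 x x = gromov_product x0 x y" "gromov_product x0 y x = gromov_product x0 y y"
      by (metis gromov_monomial_Cons gromov_monomial_Nil mult.right_neutral)+
    then have "dist x y = 0"
      by (simp add: gromov_product_def dist_commute)
    with that show False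
      by simp
  qed
qed (use assms gromov_polynomials.add gromov_polynomials_mult continuous_on_gromov_polynomial in auto)

lemma integral_eq_gromov_polynomials:
  fixes M1 M2 :: "'a::metric_space measure"
  assumes "compact (UNIV :: 'a set)"
    and M1: "finite_measure M1" "sets M1 = sets borel" and M2: "finite_measure M2" "sets M2 = sets borel"
    and moments: "\<And>zs. (\<integral>x. w x * gromov_monomial x0 zs x \<partial>M1) = (\<integral>x. w x * gromov_monomial x0 zs x \<partial>M2)"
    and "continuous_on UNIV w" "f \<in> gromov_polynomials x0"
  shows "(\<integral>x. w x * f x \<partial>M1) = (\<integral>x. w x * f x \<partial>M2)"
  using assms(8)
proof induction
  case (add f g)
  have "integrable M (\<lambda>x. w x * h x)" if "finite_measure M" "sets M = sets borel" "h \<in> gromov_polynomials x0" for M h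
    using that continuous_on_gromov_polynomial[OF that(3)] assms(7)
    by (intro integrable_continuous_compact[OF assms(1)] continuous_intros) auto
  then show ?case
    using add M1 M2 by (simp add: distrib_left)
next
  case (scale f c)
  have "(\<lambda>x. w x * (c * f x)) = (\<lambda>x. c * (w x * f x))"
    by (simp add: fun_eq_iff mult_ac)
  then show ?case
    by (simp add: scale.IH)
qed (simp add: moments)

lemma negative_type_W_signed_sq_eq_0_imp_eq:
  fixes \<phi> :: "'a::metric_space \<Rightarrow> 'b::real_inner" and M1 M2 :: "'a measure"
  assumes "compact (UNIV :: 'a set)" "\<forall>x y. dist (\<phi> x) (\<phi> y) = sqrt (dist x y)"
    and M1: "finite_measure M1" "sets M1 = sets borel" and M2: "finite_measure M2" "sets M2 = sets borel"
    and "W_signed_sq M1 M2 = 0"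
  shows "M1 = M2"
proof -
  obtain x0 :: 'a where True
    by simp
  have w: "continuous_on UNIV (\<lambda>x. exp (- dist x x0))" "\<And>x. exp (- dist x x0) > 0"
    by (auto intro!: continuous_intros)
  have "(\<integral>x. exp (- dist x x0) * f x \<partial>M1) = (\<integral>x. exp (- dist x x0) * f x \<partial>M2)"
    if "f \<in> gromov_polynomials x0" for f
    using integral_eq_gromov_polynomials[OF assms(1) M1 M2 negative_type_moments_eq[OF assms] w(1) that] .
  then have "(\<integral>x. g x \<partial>M1) = (\<integral>x. g x \<partial>M2)" if "continuous_on UNIV g" for g :: "'a \<Rightarrow> real"
    using integral_eq_continuous_if_dense_weighted[OF gromov_polynomials_function_ring[OF assms(1)] M1 M2 w]
      that by blast
  then show ?thesis
    by (rule finite_measure_eq_if_integrals_continuous_eq[OF M1 M2])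
qed

theorem theorem2p2:
  fixes \<phi> :: "'a::metric_space \<Rightarrow> 'b::{real_inner, complete_space}"
    and M1 M2 :: "'a measure"
  assumes compact_X: "compact (UNIV :: 'a set)"
    and neg_type: "\<forall>x y. dist (\<phi> x) (\<phi> y) = sqrt (dist x y)"
    and M1_borel: "sets M1 = sets borel" and M1_fin: "finite_measure M1"
    and M2_borel: "sets M2 = sets borel" and M2_fin: "finite_measure M2"
  shows "W_signed_sq M1 M2 \<ge> 0 \<and>
         (W_signed_sq M1 M2 = 0 \<longrightarrow> (\<forall>A \<in> sets borel. emeasure M1 A = emeasure M2 A))"
  using negative_type_W_signed_sq_nonneg[OF compact_X neg_type M1_fin M1_borel M2_fin M2_borel]
    negative_type_W_signed_sq_eq_0_imp_eq[OF compact_X neg_type M1_fin M1_borel M2_fin M2_borel]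
  by auto

end
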